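(* Let $Q\subset\mathrm{EX}(M)$ be a set of pairwise compatible extensions. Then $Q(M)$ is Hausdorff.
   Context: Conventions: $M$ is an $n$-dimensional smooth manifold (Hausdorff, second countable) with maximal $C^\infty$ atlas $\mathcal{A}(M)$; every chart $\alpha$ has open domain $\mathrm{dom}(\alpha)\subset M$ and open range $\mathrm{ran}(\alpha)\subset\mathbb{R}^n$. For $A\subset\mathbb{R}^n$, $\partial A$ is its boundary in $\mathbb{R}^n$; for $A\subset U\subset\mathbb{R}^n$, $\partial_U A$ is the boundary of $A$ relative to $U$. An admissible boundary point of $\alpha$ is a $p\in\partial\,\mathrm{ran}(\alpha)$ such that every sequence $(x_i)\subset\mathrm{dom}(\alpha)$ with $\alpha(x_i)\to p$ has no accumulation point in $M$; $B(\alpha)$ is the set of these. An extension is a pair $(\alpha,U)$, $U\subset\mathbb{R}^n$ open, $\mathrm{ran}(\alpha)\subset U$, $\emptyset\ne\partial_U\mathrm{ran}(\alpha)\subset B(\alpha)$; $\mathrm{EX}(M)$ is the set of extensions. A boundary set is $(\alpha,U,V)$ with $(\alpha,U)\in\mathrm{EX}(M)$, $V\subset B(\alpha)\cap U$ (a boundary point if $V=\{p\}$). $(\alpha,U,V)$ covers $(\beta,X,Y)$ if for every sequence $(y_i)\subset\mathrm{dom}(\beta)$ with $(\beta(y_i))$ having an accumulation point in $Y$ there is a subsequence $(v_i)\subset\mathrm{dom}(\alpha)$ of $(y_i)$ with $(\alpha(v_i))$ having an accumulation point in $V$; they are equivalent, $\equiv$, if each covers the other. Boundary points $(\alpha,U,\{p\})$,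 $(\beta,X,\{q\})$ are in contact if there is a sequence $(x_i)\subset\mathrm{dom}(\alpha)\cap\mathrm{dom}(\beta)$ with $\alpha(x_i)\to p$ and $\beta(x_i)\to q$. Extensions $(\alpha,U)$, $(\beta,X)$ are compatible if for all $p\in B(\alpha)\cap U$, $q\in B(\beta)\cap X$, being in contact implies $(\alpha,U,\{p\})\equiv(\beta,X,\{q\})$. Completion: for $Q\subset\mathrm{EX}(M)$ let $P=\{(\alpha,\mathrm{ran}(\alpha)):\alpha\in\mathcal{A}(M)\}$, $S_Q=P\cup Q$, $N_{(\alpha,U)}=\mathrm{ran}(\alpha)\cup\partial_U\mathrm{ran}(\alpha)$ with subspace topology of $\mathbb{R}^n$, $N_Q=\bigsqcup_{(\alpha,U)\in S_Q}N_{(\alpha,U)}$ with disjoint-union topology. Identify $x\in N_{(\alpha,U)}$ with $y\in N_{(\beta,X)}$ iff either $x\in\mathrm{ran}(\alpha)$, $y\in\mathrm{ran}(\beta)$, $\beta\circ\alpha^{-1}(x)=y$, or $x\in\partial_U\mathrm{ran}(\alpha)$, $y\in\partial_X\mathrm{ran}(\beta)$, $(\alpha,U,\{x\})\equiv(\beta,X,\{y\})$. $Q(M)$ is the quotient space with the quotient topology. *)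

theory Defs
  imports "HOL-Analysis.Analysis"
begin

fun Ck_on :: "nat \<Rightarrow> 'a::euclidean_space set \<Rightarrow> ('a \<Rightarrow> 'b::euclidean_space) \<Rightarrow> bool" where
  "Ck_on 0 S f = continuous_on S f"
| "Ck_on (Suc k) S f =
     (f differentiable_on S \<and> (\<forall>v. Ck_on k S (\<lambda>x. frechet_derivative f (at x) v)))"

definition smooth_on :: "'a::euclidean_space set \<Rightarrow> ('a \<Rightarrow> 'b::euclidean_space) \<Rightarrow> bool" where
  "smooth_on S f \<longleftrightarrow> (\<forall>k. Ck_on k S f)"

text \<open>A chart is a pair (domain, map); the dimension n is DIM('a).\<close>
type_synonym ('m, 'a) chart = "'m set \<times> ('m \<Rightarrow> 'a)"

definition cdom :: "('m, 'a) chart \<Rightarrow> 'm set" where "cdom c = fst c"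
definition cmap :: "('m, 'a) chart \<Rightarrow> 'm \<Rightarrow> 'a" where "cmap c = snd c"
definition cran :: "('m, 'a) chart \<Rightarrow> 'a set" where "cran c = cmap c ` cdom c"
definition cinv :: "('m, 'a) chart \<Rightarrow> 'a \<Rightarrow> 'm" where "cinv c = inv_into (cdom c) (cmap c)"

definition is_chart :: "'m topology \<Rightarrow> ('m, 'a::euclidean_space) chart \<Rightarrow> bool" where
  "is_chart X c \<longleftrightarrow> openin X (cdom c) \<and> open (cran c) \<and>
     homeomorphic_map (subtopology X (cdom c)) (top_of_set (cran c)) (cmap c)"

definition smoothly_compatible :: "('m, 'a::euclidean_space) chart \<Rightarrow> ('m, 'a) chart \<Rightarrow> bool" where
  "smoothly_compatible c d \<longleftrightarrow>
     smooth_on (cmap c ` (cdom c \<inter> cdom d)) (cmap d \<circ> cinv c) \<and>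
     smooth_on (cmap d ` (cdom c \<inter> cdom d)) (cmap c \<circ> cinv d)"

definition maximal_smooth_atlas :: "'m topology \<Rightarrow> ('m, 'a::euclidean_space) chart set \<Rightarrow> bool" where
  "maximal_smooth_atlas X A \<longleftrightarrow>
     (\<forall>c\<in>A. is_chart X c) \<and>
     (\<Union>c\<in>A. cdom c) = topspace X \<and>
     (\<forall>c\<in>A. \<forall>d\<in>A. smoothly_compatible c d) \<and>
     (\<forall>d. is_chart X d \<and> (\<forall>c\<in>A. smoothly_compatible c d) \<longrightarrow> d \<in> A)"

definition smooth_manifold :: "'m topology \<Rightarrow> ('m, 'a::euclidean_space) chart set \<Rightarrow> bool" where
  "smooth_manifold X A \<longleftrightarrow> Hausdorff_space X \<and> second_countable X \<and> maximal_smooth_atlas X A"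

definition seq_acc :: "'b topology \<Rightarrow> (nat \<Rightarrow> 'b) \<Rightarrow> 'b \<Rightarrow> bool" where
  "seq_acc T s y \<longleftrightarrow> y \<in> topspace T \<and>
     (\<forall>W. openin T W \<and> y \<in> W \<longrightarrow> infinite {i. s i \<in> W})"

definition rel_boundary :: "'a::euclidean_space set \<Rightarrow> 'a set \<Rightarrow> 'a set" where
  "rel_boundary U A = (top_of_set U) frontier_of A"

definition admissible_bdry :: "'m topology \<Rightarrow> ('m, 'a::euclidean_space) chart \<Rightarrow> 'a set" where
  "admissible_bdry X c = {p \<in> frontier (cran c).
     \<forall>x::nat \<Rightarrow> 'm. (\<forall>i. x i \<in> cdom c) \<and> (cmap c \<circ> x) \<longlonglongrightarrow> p \<longrightarrow>
        \<not> (\<exists>y. seq_acc X x y)}"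

definition extensions :: "'m topology \<Rightarrow> ('m, 'a::euclidean_space) chart set
    \<Rightarrow> (('m, 'a) chart \<times> 'a set) set" where
  "extensions X A = {(c, U). c \<in> A \<and> open U \<and> cran c \<subseteq> U \<and>
      rel_boundary U (cran c) \<noteq> {} \<and> rel_boundary U (cran c) \<subseteq> admissible_bdry X c}"

definition covers :: "('m, 'a::euclidean_space) chart \<Rightarrow> 'a set \<Rightarrow> ('m, 'a) chart \<Rightarrow> 'a set \<Rightarrow> bool" where
  "covers a V b Y \<longleftrightarrow>
     (\<forall>y::nat \<Rightarrow> 'm. (\<forall>i. y i \<in> cdom b) \<and> (\<exists>q\<in>Y. seq_acc euclidean (cmap b \<circ> y) q) \<longrightarrow>
        (\<exists>r. strict_mono r \<and> (\<forall>i. y (r i) \<in> cdom a) \<and>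
             (\<exists>p\<in>V. seq_acc euclidean (cmap a \<circ> (y \<circ> r)) p)))"

definition bequiv :: "('m, 'a::euclidean_space) chart \<Rightarrow> 'a set \<Rightarrow> ('m, 'a) chart \<Rightarrow> 'a set \<Rightarrow> bool" where
  "bequiv a V b Y \<longleftrightarrow> covers a V b Y \<and> covers b Y a V"

definition in_contact :: "('m, 'a::euclidean_space) chart \<Rightarrow> 'a \<Rightarrow> ('m, 'a) chart \<Rightarrow> 'a \<Rightarrow> bool" where
  "in_contact a p b q \<longleftrightarrow>
     (\<exists>x::nat \<Rightarrow> 'm. (\<forall>i. x i \<in> cdom a \<inter> cdom b) \<and>
        (cmap a \<circ> x) \<longlonglongrightarrow> p \<and> (cmap b \<circ> x) \<longlonglongrightarrow> q)"

definition compatible_ext :: "'m topology \<Rightarrow> ('m, 'a::euclidean_space) chart \<times> 'a set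
    \<Rightarrow> ('m, 'a) chart \<times> 'a set \<Rightarrow> bool" where
  "compatible_ext X e f \<longleftrightarrow>
     (\<forall>p \<in> admissible_bdry X (fst e) \<inter> snd e. \<forall>q \<in> admissible_bdry X (fst f) \<inter> snd f.
        in_contact (fst e) p (fst f) q \<longrightarrow> bequiv (fst e) {p} (fst f) {q})"

definition quotient_topology :: "'b topology \<Rightarrow> ('b \<Rightarrow> 'b \<Rightarrow> bool) \<Rightarrow> 'b set topology" where
  "quotient_topology T R = topology (\<lambda>W.
     W \<subseteq> (\<lambda>x. {y \<in> topspace T. R x y}) ` topspace T \<and>
     openin T {x \<in> topspace T. {y \<in> topspace T. R x y} \<in> W})"

definition S_Q :: "('m, 'a::euclidean_space) chart set \<Rightarrow> (('m, 'a) chart \<times> 'a set) set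
    \<Rightarrow> (('m, 'a) chart \<times> 'a set) set" where
  "S_Q A Q = {(c, cran c) | c. c \<in> A} \<union> Q"

definition N_ext :: "('m, 'a::euclidean_space) chart \<times> 'a set \<Rightarrow> 'a topology" where
  "N_ext e = top_of_set (cran (fst e) \<union> rel_boundary (snd e) (cran (fst e)))"

definition N_Q :: "('m, 'a::euclidean_space) chart set \<Rightarrow> (('m, 'a) chart \<times> 'a set) set
    \<Rightarrow> ((('m, 'a) chart \<times> 'a set) \<times> 'a) topology" where
  "N_Q A Q = sum_topology N_ext (S_Q A Q)"

definition ident :: "((('m, 'a::euclidean_space) chart \<times> 'a set) \<times> 'a)
    \<Rightarrow> ((('m, 'a) chart \<times> 'a set) \<times> 'a) \<Rightarrow> bool" where
  "ident u v \<longleftrightarrow>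
     (let a = fst (fst u); U = snd (fst u); x = snd u;
          b = fst (fst v); Y = snd (fst v); y = snd v in
      (x \<in> cran a \<and> y \<in> cran b \<and> cinv a x \<in> cdom b \<and> cmap b (cinv a x) = y) \<or>
      (x \<in> rel_boundary U (cran a) \<and> y \<in> rel_boundary Y (cran b) \<and> bequiv a {x} b {y}))"

definition completion :: "'m topology \<Rightarrow> ('m, 'a::euclidean_space) chart set
    \<Rightarrow> (('m, 'a) chart \<times> 'a set) set \<Rightarrow> ((('m, 'a) chart \<times> 'a set) \<times> 'a) set topology" where
  "completion X A Q = quotient_topology (N_Q A Q) ident"

end

theory Submission imports Defs begin

text \<open>
  Identification is an equivalence relation on \<open>N_Q\<close>, so two distinct points of the quotient
  are separated as soon as two non-identified points \<open>(e, x)\<close>, \<open>(f, y)\<close> of \<open>N_Q\<close> have disjoint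
  saturated open neighbourhoods. We take the saturations of small balls around \<open>x\<close> and \<open>y\<close>.
  Such a saturation is open: at an interior point because chart transitions are homeomorphisms,
  at a boundary point because equivalent boundary points cover each other, so that points of
  \<open>M\<close> approaching one of them are eventually mapped into the ball around the other.
  If the saturations of the balls of radius \<open>1/(k+1)\<close> met for every \<open>k\<close>, we would obtain
  points \<open>m\<^sub>k\<close> of \<open>M\<close> whose images converge to \<open>x\<close> in one chart and to \<open>y\<close> in the other.
  The Hausdorff property of \<open>M\<close>, admissibility of the boundary points and pairwise
  compatibility of \<open>Q\<close> then force \<open>(e, x)\<close> and \<open>(f, y)\<close> to be identified.
\<close>

lemma chart_homeomorphic_map:
  "is_chart X c \<Longrightarrow> homeomorphic_map (subtopology X (cdom c)) (top_of_set (cran c)) (cmap c)"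
  by (simp add: is_chart_def)

lemma openin_chart_dom: "is_chart X c \<Longrightarrow> openin X (cdom c)"
  by (simp add: is_chart_def)

lemma open_chart_ran: "is_chart X c \<Longrightarrow> open (cran c)"
  by (simp add: is_chart_def)

lemma topspace_subtopology_chart_dom:
  assumes "is_chart X c" shows "topspace (subtopology X (cdom c)) = cdom c"
  using openin_subset[OF openin_chart_dom[OF assms]] by (simp add: Int_absorb1)

lemma inj_on_chart: "is_chart X c \<Longrightarrow> inj_on (cmap c) (cdom c)"
  by (metis chart_homeomorphic_map homeomorphic_imp_injective_map topspace_subtopology_chart_dom)

lemma cmap_in_cran: "x \<in> cdom c \<Longrightarrow> cmap c x \<in> cran c"
  by (simp add: cran_def)

lemma cinv_in_cdom: "y \<in> cran c \<Longrightarrow> cinv c y \<in> cdom c"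
  by (simp add: cinv_def cran_def inv_into_into)

lemma cmap_cinv: "y \<in> cran c \<Longrightarrow> cmap c (cinv c y) = y"
  by (simp add: cinv_def cran_def f_inv_into_f)

lemma cinv_cmap: "is_chart X c \<Longrightarrow> x \<in> cdom c \<Longrightarrow> cinv c (cmap c x) = x"
  by (simp add: cinv_def inj_on_chart)

lemma continuous_map_cmap:
  "is_chart X c \<Longrightarrow> continuous_map (subtopology X (cdom c)) euclidean (cmap c)"
  using chart_homeomorphic_map continuous_map_into_fulltopology homeomorphic_imp_continuous_map
  by blast

lemma continuous_map_cinv:
  assumes c: "is_chart X c"
  shows "continuous_map (top_of_set (cran c)) (subtopology X (cdom c)) (cinv c)"
proof -
  obtain g where g: "homeomorphic_maps (subtopology X (cdom c)) (top_of_set (cran c)) (cmap c) g"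
    using chart_homeomorphic_map[OF c] homeomorphic_map_maps by blast
  have "g y = cinv c y" if y: "y \<in> cran c" for y
  proof -
    have "g y \<in> cdom c" "cmap c (g y) = y"
      using g y topspace_subtopology_chart_dom[OF c]
      by (auto simp: homeomorphic_maps_def continuous_map_def)
    then show ?thesis
      using cinv_cmap[OF c] by metis
  qed
  moreover have "continuous_map (top_of_set (cran c)) (subtopology X (cdom c)) g"
    using g by (simp add: homeomorphic_maps_def)
  ultimately show ?thesis
    by (metis continuous_map_eq topspace_euclidean_subtopology)
qed

lemma open_chart_image:
  assumes c: "is_chart X c" and V: "openin X V" "V \<subseteq> cdom c"
  shows "open (cmap c ` V)"
proof -
  have "openin (subtopology X (cdom c)) V"
    using V by (metis inf.absorb_iff2 openin_subtopology_Int2)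
  then have "openin (top_of_set (cran c)) (cmap c ` V)"
    using homeomorphic_map_openness[OF chart_homeomorphic_map[OF c]] V
      topspace_subtopology_chart_dom[OF c] by auto
  then show ?thesis
    using open_chart_ran[OF c] openin_open_trans by blast
qed

lemma limitin_cinv:
  assumes c: "is_chart X c" and x: "\<And>i. x i \<in> cdom c"
    and lim: "(cmap c \<circ> x) \<longlonglongrightarrow> w" and w: "w \<in> cran c"
  shows "limitin X x (cinv c w) sequentially"
proof -
  have "limitin (top_of_set (cran c)) (cmap c \<circ> x) w sequentially"
    using lim w x by (simp add: limitin_subtopology limitin_canonical_iff cmap_in_cran)
  then have "limitin (subtopology X (cdom c)) (cinv c \<circ> (cmap c \<circ> x)) (cinv c w) sequentially"
    by (rule continuous_map_limit[OF continuous_map_cinv[OF c]])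
  moreover have "cinv c \<circ> (cmap c \<circ> x) = x"
    using cinv_cmap[OF c] x by auto
  ultimately show ?thesis
    by (simp add: limitin_subtopology)
qed

lemma closure_cran_sequentially:
  fixes c :: "('m, 'a::first_countable_topology) chart"
  assumes "p \<in> closure (cran c)"
  obtains x where "\<And>i. x i \<in> cdom c" "(cmap c \<circ> x) \<longlonglongrightarrow> p"
proof -
  obtain s where s: "\<forall>n. s n \<in> cran c" "s \<longlonglongrightarrow> p"
    using assms unfolding closure_sequential by blast
  have "\<forall>i. (cinv c \<circ> s) i \<in> cdom c"
    using s(1) by (simp add: cinv_in_cdom)
  moreover have "cmap c \<circ> (cinv c \<circ> s) = s"
    using s(1) by (simp add: fun_eq_iff cmap_cinv)
  ultimately show ?thesis
    using that s(2) by metis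
qed

lemma seq_acc_limitin:
  assumes "limitin T x l sequentially" shows "seq_acc T x l"
  unfolding seq_acc_def
proof (intro conjI allI impI)
  show "l \<in> topspace T"
    using assms limitin_topspace by metis
  fix W assume "openin T W \<and> l \<in> W"
  then have "eventually (\<lambda>i. x i \<in> W) sequentially"
    using assms by (auto simp: limitin_def)
  then obtain N where "\<forall>n\<ge>N. x n \<in> W"
    unfolding eventually_sequentially by blast
  then have "{N..} \<subseteq> {i. x i \<in> W}"
    by auto
  then show "infinite {i. x i \<in> W}"
    using infinite_Ici finite_subset by blast
qed

lemma seq_acc_LIMSEQ: "x \<longlonglongrightarrow> l \<Longrightarrow> seq_acc euclidean x l"
  by (rule seq_acc_limitin) (simp add: limitin_canonical_iff)

lemma seq_acc_eventually_meets:
  assumes "seq_acc euclidean x l" "open W" "l \<in> W" "eventually P sequentially"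
  obtains i where "x i \<in> W" "P i"
proof -
  obtain N where N: "\<forall>n\<ge>N. P n"
    using assms(4) unfolding eventually_sequentially by blast
  have "infinite {i. x i \<in> W}"
    using assms(1-3) by (simp add: seq_acc_def)
  then obtain i where "i \<ge> N" "x i \<in> W"
    unfolding infinite_nat_iff_unbounded_le by blast
  then show ?thesis
    using N by (intro that) auto
qed

lemma LIMSEQ_dist_less_inverse_Suc:
  fixes f :: "nat \<Rightarrow> 'a::real_normed_vector"
  assumes "\<And>k. dist (f k) z < 1 / real (Suc k)"
  shows "f \<longlonglongrightarrow> z"
proof -
  have "(\<lambda>k. f k - z) \<longlonglongrightarrow> 0"
    by (rule LIMSEQ_norm_0) (use assms in \<open>simp add: dist_norm\<close>)
  then show ?thesis
    by (simp add: LIM_zero_iff)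
qed

section \<open>Quotient topologies\<close>

definition saturated_in :: "'b topology \<Rightarrow> ('b \<Rightarrow> 'b \<Rightarrow> bool) \<Rightarrow> 'b set \<Rightarrow> bool" where
  "saturated_in T R G \<longleftrightarrow> (\<forall>a\<in>G. \<forall>b\<in>topspace T. R a b \<longrightarrow> b \<in> G)"

lemma openin_quotient_topology:
  "openin (quotient_topology T R) W \<longleftrightarrow>
     W \<subseteq> (\<lambda>x. {y \<in> topspace T. R x y}) ` topspace T \<and>
     openin T {x \<in> topspace T. {y \<in> topspace T. R x y} \<in> W}"
proof -
  define cl where "cl x = {y \<in> topspace T. R x y}" for x
  define P where "P W \<longleftrightarrow> W \<subseteq> cl ` topspace T \<and> openin T {x \<in> topspace T. cl x \<in> W}" for W
  have "P (S \<inter> S')" if "P S" "P S'" for S S'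
  proof -
    have "{x \<in> topspace T. cl x \<in> S \<inter> S'} =
        {x \<in> topspace T. cl x \<in> S} \<inter> {x \<in> topspace T. cl x \<in> S'}"
      by auto
    then show ?thesis
      using that by (auto simp: P_def)
  qed
  moreover have "P (\<Union>K)" if "\<forall>k\<in>K. P k" for K
  proof -
    have "{x \<in> topspace T. cl x \<in> \<Union>K} = (\<Union>k\<in>K. {x \<in> topspace T. cl x \<in> k})"
      by auto
    then show ?thesis
      using that by (auto simp: P_def)
  qed
  ultimately have "istopology P"
    unfolding istopology_def by blast
  moreover have "P = (\<lambda>W. W \<subseteq> cl ` topspace T \<and> openin T {x \<in> topspace T. cl x \<in> W})"
    by (simp add: P_def fun_eq_iff)
  ultimately show ?thesis
    unfolding quotient_topology_def cl_def by simp
qed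

lemma Hausdorff_quotient_topology:
  assumes refl: "\<And>u. u \<in> topspace T \<Longrightarrow> R u u"
    and sym: "\<And>u v. u \<in> topspace T \<Longrightarrow> v \<in> topspace T \<Longrightarrow> R u v \<Longrightarrow> R v u"
    and trans: "\<And>u v w. u \<in> topspace T \<Longrightarrow> v \<in> topspace T \<Longrightarrow> w \<in> topspace T \<Longrightarrow>
        R u v \<Longrightarrow> R v w \<Longrightarrow> R u w"
    and sep: "\<And>u v. u \<in> topspace T \<Longrightarrow> v \<in> topspace T \<Longrightarrow> \<not> R u v \<Longrightarrow>
        \<exists>G H. openin T G \<and> openin T H \<and> saturated_in T R G \<and> saturated_in T R H \<and>
          u \<in> G \<and> v \<in> H \<and> G \<inter> H = {}"
  shows "Hausdorff_space (quotient_topology T R)"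
proof -
  define cl where "cl x = {y \<in> topspace T. R x y}" for x
  have op: "openin (quotient_topology T R) W \<longleftrightarrow>
      W \<subseteq> cl ` topspace T \<and> openin T {x \<in> topspace T. cl x \<in> W}" for W
    unfolding openin_quotient_topology cl_def by simp
  have topspace_sub: "topspace (quotient_topology T R) \<subseteq> cl ` topspace T"
    using openin_topspace[of "quotient_topology T R"] unfolding op by (rule conjunct1)
  have cl_eq: "cl u = cl v" if "u \<in> topspace T" "v \<in> topspace T" "R u v" for u v
    unfolding cl_def using that sym trans by blast
  have in_saturated: "x \<in> G" if "saturated_in T R G" "g \<in> G" "x \<in> topspace T" "cl x = cl g" for G g x
  proof -
    have "x \<in> cl g"
      using that(3,4) refl[of x] by (auto simp: cl_def)
    then show ?thesis
      using that(1,2) by (auto simp: saturated_in_def cl_def)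
  qed
  have open_image: "openin (quotient_topology T R) (cl ` G)"
    if G: "openin T G" "saturated_in T R G" for G
  proof -
    have "{x \<in> topspace T. cl x \<in> cl ` G} = G"
      using openin_subset[OF G(1)] in_saturated[OF G(2)] by blast
    then show ?thesis
      unfolding op using openin_subset[OF G(1)] G(1) by auto
  qed
  show ?thesis
    unfolding Hausdorff_space_def
  proof (intro allI impI)
    fix C1 C2
    assume C: "C1 \<in> topspace (quotient_topology T R) \<and> C2 \<in> topspace (quotient_topology T R) \<and>
      C1 \<noteq> C2"
    then obtain u v where uv: "u \<in> topspace T" "v \<in> topspace T" "C1 = cl u" "C2 = cl v"
      using topspace_sub by blast
    then have "\<not> R u v"
      using cl_eq C by blast
    then obtain G H where GH: "openin T G" "openin T H" "saturated_in T R G"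
        "saturated_in T R H" "u \<in> G" "v \<in> H" "G \<inter> H = {}"
      using sep uv(1,2) by blast
    have "disjnt (cl ` G) (cl ` H)"
      using GH(3,7) in_saturated[OF GH(4)] openin_subset[OF GH(1)]
      unfolding disjnt_def by blast
    moreover have "C1 \<in> cl ` G" "C2 \<in> cl ` H"
      using GH(5,6) uv(3,4) by auto
    ultimately show "\<exists>U V. openin (quotient_topology T R) U \<and> openin (quotient_topology T R) V \<and>
        C1 \<in> U \<and> C2 \<in> V \<and> disjnt U V"
      using open_image GH(1-4) by blast
  qed
qed

lemma covers_refl: "covers a V a V"
  unfolding covers_def by (metis comp_id id_apply strict_mono_id)

lemma covers_trans:
  assumes ab: "covers a V b Y" and bc: "covers b Y c Z"
  shows "covers a V c Z"
  unfolding covers_def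
proof (intro allI impI)
  fix y assume "(\<forall>i. y i \<in> cdom c) \<and> (\<exists>q\<in>Z. seq_acc euclidean (cmap c \<circ> y) q)"
  then obtain r1 where r1: "strict_mono r1" "\<forall>i. y (r1 i) \<in> cdom b"
      "\<exists>q\<in>Y. seq_acc euclidean (cmap b \<circ> (y \<circ> r1)) q"
    using bc unfolding covers_def by blast
  then have "(\<forall>i. (y \<circ> r1) i \<in> cdom b) \<and> (\<exists>q\<in>Y. seq_acc euclidean (cmap b \<circ> (y \<circ> r1)) q)"
    by simp
  then obtain r2 where r2: "strict_mono r2" "\<forall>i. (y \<circ> r1) (r2 i) \<in> cdom a"
      "\<exists>p\<in>V. seq_acc euclidean (cmap a \<circ> (y \<circ> r1 \<circ> r2)) p"
    using ab unfolding covers_def by blast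
  show "\<exists>r. strict_mono r \<and> (\<forall>i. y (r i) \<in> cdom a) \<and>
      (\<exists>p\<in>V. seq_acc euclidean (cmap a \<circ> (y \<circ> r)) p)"
    using strict_mono_o[OF r1(1) r2(1)] r2(2,3) by (intro exI[of _ "r1 \<circ> r2"]) (auto simp: o_assoc)
qed

lemma bequiv_refl: "bequiv a V a V"
  by (simp add: bequiv_def covers_refl)

lemma bequiv_sym: "bequiv a V b Y \<Longrightarrow> bequiv b Y a V"
  by (simp add: bequiv_def)

lemma bequiv_trans: "bequiv a V b Y \<Longrightarrow> bequiv b Y c Z \<Longrightarrow> bequiv a V c Z"
  unfolding bequiv_def using covers_trans by blast

text \<open>
  Otherwise a sequence in \<open>dom b\<close> converging to \<open>z\<close> would have no subsequence whose
  \<open>a\<close>-images accumulate at \<open>p\<close>.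
\<close>
lemma covers_point_nhd:
  assumes cov: "covers a {p} b {z}" and \<epsilon>: "\<epsilon> > 0"
  shows "\<exists>d>0. \<forall>w\<in>cran b. dist w z < d \<longrightarrow> cinv b w \<in> cdom a \<and> cmap a (cinv b w) \<in> ball p \<epsilon>"
proof (rule ccontr)
  assume none: "\<not> ?thesis"
  have "\<exists>w\<in>cran b. dist w z < 1 / real (Suc k) \<and>
      \<not> (cinv b w \<in> cdom a \<and> cmap a (cinv b w) \<in> ball p \<epsilon>)" for k
  proof -
    have "1 / real (Suc k) > 0"
      by simp
    then show ?thesis
      using none by blast
  qed
  then obtain w where w: "\<And>k. w k \<in> cran b" "\<And>k. dist (w k) z < 1 / real (Suc k)"
      "\<And>k. \<not> (cinv b (w k) \<in> cdom a \<and> cmap a (cinv b (w k)) \<in> ball p \<epsilon>)"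
    by metis
  define s where "s = cinv b \<circ> w"
  have "cmap b \<circ> s = w"
    by (rule ext) (simp add: s_def cmap_cinv[OF w(1)])
  then have "\<exists>q\<in>{z}. seq_acc euclidean (cmap b \<circ> s) q"
    using seq_acc_LIMSEQ LIMSEQ_dist_less_inverse_Suc w(2) by auto
  moreover have "\<forall>i. s i \<in> cdom b"
    by (simp add: s_def cinv_in_cdom[OF w(1)])
  ultimately obtain r where r: "\<forall>i. s (r i) \<in> cdom a" "seq_acc euclidean (cmap a \<circ> (s \<circ> r)) p"
    using cov unfolding covers_def by blast
  have "p \<in> ball p \<epsilon>"
    using \<epsilon> by simp
  then obtain i where "(cmap a \<circ> (s \<circ> r)) i \<in> ball p \<epsilon>"
    using seq_acc_eventually_meets[OF r(2) open_ball _ eventually_True] by blast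
  then show False
    using w(3) r(1) by (simp add: s_def)
qed

lemma rel_boundary_open_subset:
  assumes "open U" "open R" "R \<subseteq> U"
  shows "rel_boundary U R = U \<inter> closure R - R"
proof -
  have "(top_of_set U) closure_of R = U \<inter> closure R"
    using assms(3) by (simp add: closure_of_subtopology Int_absorb1)
  moreover have "(top_of_set U) interior_of R = R"
    using assms by (simp add: interior_of_openin openin_open_eq)
  ultimately show ?thesis
    unfolding rel_boundary_def frontier_of_def by simp
qed

lemma rel_boundary_self: "rel_boundary U U = {}"
  unfolding rel_boundary_def by (metis frontier_of_topspace topspace_euclidean_subtopology)

lemma ident_iff:
  "ident (e, x) (f, y) \<longleftrightarrow>
    (x \<in> cran (fst e) \<and> y \<in> cran (fst f) \<and> cinv (fst e) x \<in> cdom (fst f) \<and>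
      cmap (fst f) (cinv (fst e) x) = y) \<or>
    (x \<in> rel_boundary (snd e) (cran (fst e)) \<and> y \<in> rel_boundary (snd f) (cran (fst f)) \<and>
      bequiv (fst e) {x} (fst f) {y})"
  by (simp add: ident_def Let_def)

section \<open>The completion\<close>

locale completion_setting =
  fixes X :: "'m topology" and A :: "('m, 'a::euclidean_space) chart set"
    and Q :: "(('m, 'a) chart \<times> 'a set) set"
  assumes manifold: "smooth_manifold X A"
    and Q_extensions: "Q \<subseteq> extensions X A"
    and Q_compatible: "pairwise (compatible_ext X) Q"
begin

abbreviation SQ :: "(('m, 'a) chart \<times> 'a set) set" where
  "SQ \<equiv> S_Q A Q"

abbreviation NQ :: "((('m, 'a) chart \<times> 'a set) \<times> 'a) topology" where
  "NQ \<equiv> N_Q A Q"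

abbreviation bd :: "('m, 'a) chart \<times> 'a set \<Rightarrow> 'a set" where
  "bd e \<equiv> rel_boundary (snd e) (cran (fst e))"

lemma chart_in_atlas: "c \<in> A \<Longrightarrow> is_chart X c"
  using manifold by (auto simp: smooth_manifold_def maximal_smooth_atlas_def)

lemma S_Q_cases:
  assumes "e \<in> SQ"
  obtains "e \<in> Q" "fst e \<in> A" "open (snd e)" "cran (fst e) \<subseteq> snd e"
      "bd e \<subseteq> admissible_bdry X (fst e)"
    | c where "e = (c, cran c)" "c \<in> A"
proof (cases "e \<in> Q")
  case True
  then have "e \<in> extensions X A"
    using Q_extensions by blast
  then show ?thesis
    using that(1) True by (cases e) (simp add: extensions_def)
next
  case False
  then show ?thesis
    using that(2) assms by (auto simp: S_Q_def)
qed

lemma is_chart_fst: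
  assumes "e \<in> SQ" shows "is_chart X (fst e)"
  using assms by (cases rule: S_Q_cases) (simp_all add: chart_in_atlas)

lemma bd_eq: "e \<in> SQ \<Longrightarrow> bd e = snd e \<inter> closure (cran (fst e)) - cran (fst e)"
  by (erule S_Q_cases)
    (auto simp: rel_boundary_open_subset open_chart_ran[OF chart_in_atlas])

lemma open_snd:
  assumes "e \<in> SQ" shows "open (snd e)"
  using assms by (cases rule: S_Q_cases) (simp_all add: open_chart_ran[OF chart_in_atlas])

lemma bd_admissible: "e \<in> SQ \<Longrightarrow> bd e \<subseteq> admissible_bdry X (fst e)"
  by (erule S_Q_cases) (auto simp: rel_boundary_self)

lemma bd_nonempty_imp_Q: "e \<in> SQ \<Longrightarrow> z \<in> bd e \<Longrightarrow> e \<in> Q"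
  by (erule S_Q_cases) (auto simp: rel_boundary_self)

lemma topspace_NQ: "topspace NQ = {(e, z). e \<in> SQ \<and> z \<in> cran (fst e) \<union> bd e}"
  by (auto simp: N_Q_def N_ext_def)

lemma bd_no_seq_acc:
  assumes e: "e \<in> SQ" and x: "x \<in> bd e" and m: "\<And>i. m i \<in> cdom (fst e)"
    and lim: "(cmap (fst e) \<circ> m) \<longlonglongrightarrow> x"
  shows "\<not> seq_acc X m y"
  using bd_admissible[OF e] x m lim unfolding admissible_bdry_def by blast

lemma bequiv_if_in_contact:
  assumes e: "e \<in> SQ" and f: "f \<in> SQ" and p: "p \<in> bd e" and q: "q \<in> bd f"
    and contact: "in_contact (fst e) p (fst f) q"
  shows "bequiv (fst e) {p} (fst f) {q}"
proof (cases "e = f")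
  case True
  then have "p = q"
    using contact LIMSEQ_unique by (auto simp: in_contact_def)
  then show ?thesis
    using True bequiv_refl by simp
next
  case False
  have "compatible_ext X e f"
    using Q_compatible bd_nonempty_imp_Q e f p q False by (auto simp: pairwise_def)
  moreover have "p \<in> admissible_bdry X (fst e) \<inter> snd e" "q \<in> admissible_bdry X (fst f) \<inter> snd f"
    using bd_admissible bd_eq e f p q by blast+
  ultimately show ?thesis
    using contact unfolding compatible_ext_def by blast
qed

lemma ident_refl:
  assumes "u \<in> topspace NQ" shows "ident u u"
proof -
  obtain e z where u: "u = (e, z)" "z \<in> cran (fst e) \<union> bd e"
    using assms unfolding topspace_NQ by blast
  then show ?thesis
    using bequiv_refl[of "fst e" "{z}"] by (auto simp: ident_iff cinv_in_cdom cmap_cinv)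
qed

lemma ident_sym:
  assumes u: "u \<in> topspace NQ" and v: "v \<in> topspace NQ" and uv: "ident u v"
  shows "ident v u"
proof -
  obtain e x f y where uv_eq: "u = (e, x)" "v = (f, y)" and e: "e \<in> SQ" and f: "f \<in> SQ"
    using u v unfolding topspace_NQ by blast
  consider "x \<in> cran (fst e)" "y \<in> cran (fst f)" "cinv (fst e) x \<in> cdom (fst f)"
      "cmap (fst f) (cinv (fst e) x) = y"
    | "x \<in> bd e" "y \<in> bd f" "bequiv (fst e) {x} (fst f) {y}"
    using uv unfolding uv_eq ident_iff by blast
  then show ?thesis
  proof cases
    case 1
    then have "cinv (fst f) y = cinv (fst e) x"
      using cinv_cmap[OF is_chart_fst[OF f]] by blast
    then show ?thesis
      using 1 unfolding uv_eq ident_iff by (simp add: cinv_in_cdom cmap_cinv)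
  next
    case 2
    then show ?thesis
      unfolding uv_eq ident_iff using bequiv_sym by blast
  qed
qed

lemma ident_trans:
  assumes u: "u \<in> topspace NQ" and v: "v \<in> topspace NQ" and w: "w \<in> topspace NQ"
    and uv: "ident u v" and vw: "ident v w"
  shows "ident u w"
proof -
  obtain e x f y g z where uvw_eq: "u = (e, x)" "v = (f, y)" "w = (g, z)" and f: "f \<in> SQ"
    using u v w unfolding topspace_NQ by blast
  have not_both: "y \<notin> cran (fst f) \<or> y \<notin> bd f"
    using bd_eq[OF f] by blast
  consider "x \<in> cran (fst e)" "y \<in> cran (fst f)" "cinv (fst e) x \<in> cdom (fst f)"
      "cmap (fst f) (cinv (fst e) x) = y"
    | "x \<in> bd e" "y \<in> bd f" "bequiv (fst e) {x} (fst f) {y}"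
    using uv unfolding uvw_eq ident_iff by blast
  then show ?thesis
  proof cases
    case 1
    then have "cinv (fst f) y = cinv (fst e) x"
      using cinv_cmap[OF is_chart_fst[OF f]] by blast
    moreover have "z \<in> cran (fst g)" "cinv (fst f) y \<in> cdom (fst g)"
        "cmap (fst g) (cinv (fst f) y) = z"
      using vw 1(2) not_both unfolding uvw_eq ident_iff by blast+
    ultimately show ?thesis
      using 1(1) unfolding uvw_eq ident_iff by simp
  next
    case 2
    then have "z \<in> bd g" "bequiv (fst f) {y} (fst g) {z}"
      using vw not_both unfolding uvw_eq ident_iff by blast+
    then show ?thesis
      using 2 bequiv_trans unfolding uvw_eq ident_iff by blast
  qed
qed

text \<open>
  Two interior limits come from the same point of the Hausdorff space \<open>M\<close>, an interior and a
  boundary limit contradict admissibility, and two boundary limits are in contact, hence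
  equivalent by compatibility.
\<close>
lemma ident_if_common_limit:
  assumes u: "(e, x) \<in> topspace NQ" and v: "(f, y) \<in> topspace NQ"
    and m: "\<And>i. m i \<in> cdom (fst e) \<and> m i \<in> cdom (fst f)"
    and lim_x: "(cmap (fst e) \<circ> m) \<longlonglongrightarrow> x" and lim_y: "(cmap (fst f) \<circ> m) \<longlonglongrightarrow> y"
  shows "ident (e, x) (f, y)"
proof -
  have e: "e \<in> SQ" and x: "x \<in> cran (fst e) \<union> bd e"
    and f: "f \<in> SQ" and y: "y \<in> cran (fst f) \<union> bd f"
    using u v by (auto simp: topspace_NQ)
  have m_e: "\<And>i. m i \<in> cdom (fst e)" and m_f: "\<And>i. m i \<in> cdom (fst f)"
    using m by auto
  note lim_e = limitin_cinv[OF is_chart_fst[OF e] m_e lim_x]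
  note lim_f = limitin_cinv[OF is_chart_fst[OF f] m_f lim_y]
  consider "x \<in> cran (fst e)" "y \<in> cran (fst f)" | "x \<in> cran (fst e)" "y \<in> bd f"
    | "x \<in> bd e" "y \<in> cran (fst f)" | "x \<in> bd e" "y \<in> bd f"
    using x y by blast
  then show ?thesis
  proof cases
    case 1
    have "cinv (fst e) x = cinv (fst f) y"
      using limitin_Hausdorff_unique[OF lim_e[OF 1(1)] lim_f[OF 1(2)] trivial_limit_sequentially]
        manifold by (simp add: smooth_manifold_def)
    then show ?thesis
      using 1 by (simp add: ident_iff cinv_in_cdom cmap_cinv)
  next
    case 2
    then show ?thesis
      using bd_no_seq_acc[OF f _ m_f lim_y] seq_acc_limitin[OF lim_e] by blast
  next
    case 3
    then show ?thesis
      using bd_no_seq_acc[OF e _ m_e lim_x] seq_acc_limitin[OF lim_f] by blast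
  next
    case 4
    then have "in_contact (fst e) x (fst f) y"
      using m lim_x lim_y unfolding in_contact_def by blast
    then show ?thesis
      using 4 bequiv_if_in_contact[OF e f] by (simp add: ident_iff)
  qed
qed

subsection \<open>Saturations of open sets\<close>

definition saturation :: "('m, 'a) chart \<times> 'a set \<Rightarrow> 'a set \<Rightarrow> ((('m, 'a) chart \<times> 'a set) \<times> 'a) set"
  where "saturation e B = {w \<in> topspace NQ. \<exists>z\<in>B. (e, z) \<in> topspace NQ \<and> ident (e, z) w}"

lemma mem_saturation:
  assumes "(e, x) \<in> topspace NQ" "x \<in> B" shows "(e, x) \<in> saturation e B"
  using assms ident_refl[OF assms(1)] unfolding saturation_def by blast

lemma saturated_in_saturation: "saturated_in NQ ident (saturation e B)"
  unfolding saturated_in_def saturation_def using ident_trans by blast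

lemma saturation_chart_point:
  assumes e: "e \<in> SQ" and g: "g \<in> SQ" and m: "m \<in> cdom (fst e)" "m \<in> cdom (fst g)"
    and B: "cmap (fst e) m \<in> B"
  shows "(g, cmap (fst g) m) \<in> saturation e B"
proof -
  have ran: "cmap (fst e) m \<in> cran (fst e)" "cmap (fst g) m \<in> cran (fst g)"
    using m by (simp_all add: cmap_in_cran)
  moreover have "cinv (fst e) (cmap (fst e) m) = m"
    using cinv_cmap[OF is_chart_fst[OF e] m(1)] .
  ultimately have "ident (e, cmap (fst e) m) (g, cmap (fst g) m)"
    using m(2) by (simp add: ident_iff)
  moreover have "(e, cmap (fst e) m) \<in> topspace NQ" "(g, cmap (fst g) m) \<in> topspace NQ"
    using e g ran by (simp_all add: topspace_NQ)
  ultimately show ?thesis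
    using B unfolding saturation_def by blast
qed

lemma saturation_common_limit:
  assumes e: "e \<in> SQ" and gz: "(g, z) \<in> topspace NQ"
    and t: "\<And>i. t i \<in> cdom (fst e) \<and> t i \<in> cdom (fst g)"
    and lim_p: "(cmap (fst e) \<circ> t) \<longlonglongrightarrow> p" and p: "p \<in> B \<inter> snd e"
    and lim_z: "(cmap (fst g) \<circ> t) \<longlonglongrightarrow> z"
  shows "(g, z) \<in> saturation e B"
proof -
  have "\<forall>i. (cmap (fst e) \<circ> t) i \<in> cran (fst e)"
    using t by (simp add: cmap_in_cran)
  then have "p \<in> closure (cran (fst e))"
    unfolding closure_sequential using lim_p by blast
  then have "(e, p) \<in> topspace NQ"
    using e p bd_eq[OF e] unfolding topspace_NQ by blast
  moreover have "ident (e, p) (g, z)"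
    using ident_if_common_limit[OF calculation gz t lim_p lim_z] .
  ultimately show ?thesis
    using gz p unfolding saturation_def by blast
qed

lemma saturation_nhd_interior:
  assumes e: "e \<in> SQ" and g: "g \<in> SQ" and B: "open B"
    and p: "p \<in> B" "p \<in> cran (fst e)" and m: "cinv (fst e) p \<in> cdom (fst g)"
  shows "\<exists>d>0. \<forall>z. dist z (cmap (fst g) (cinv (fst e) p)) < d \<longrightarrow> (g, z) \<in> saturation e B"
proof -
  note ce = is_chart_fst[OF e] and cg = is_chart_fst[OF g]
  define V where "V = {x \<in> cdom (fst e). cmap (fst e) x \<in> B} \<inter> cdom (fst g)"
  have "openin euclidean B"
    using B by simp
  from openin_continuous_map_preimage[OF continuous_map_cmap[OF ce] this]
  have "openin (subtopology X (cdom (fst e))) {x \<in> cdom (fst e). cmap (fst e) x \<in> B}"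
    unfolding topspace_subtopology_chart_dom[OF ce] .
  then have "openin X V"
    unfolding V_def using openin_trans_full openin_chart_dom[OF ce] openin_chart_dom[OF cg]
    by blast
  moreover have "V \<subseteq> cdom (fst g)"
    by (simp add: V_def)
  ultimately have "open (cmap (fst g) ` V)"
    by (rule open_chart_image[OF cg])
  moreover have "cinv (fst e) p \<in> V"
    using m p cinv_in_cdom[OF p(2)] cmap_cinv[OF p(2)] by (simp add: V_def)
  ultimately obtain d where d: "d > 0"
      "ball (cmap (fst g) (cinv (fst e) p)) d \<subseteq> cmap (fst g) ` V"
    using open_contains_ball by blast
  have in_saturation: "(g, z) \<in> saturation e B" if "z \<in> cmap (fst g) ` V" for z
    using that saturation_chart_point[OF e g] unfolding V_def by blast
  show ?thesis
  proof (intro exI[of _ d] conjI allI impI)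
    fix z assume "dist z (cmap (fst g) (cinv (fst e) p)) < d"
    then have "z \<in> cmap (fst g) ` V"
      using d(2) by (auto simp: dist_commute)
    then show "(g, z) \<in> saturation e B"
      by (rule in_saturation)
  qed (rule d(1))
qed

text \<open>
  Near a boundary point \<open>z\<close> of \<open>g\<close> equivalent to a boundary point \<open>p\<close> of \<open>e\<close>, every point
  \<open>z'\<close> of \<open>N_g\<close> is a limit of chart points whose \<open>e\<close>-images stay in a compact ball around \<open>p\<close>;
  a convergent subsequence of the latter identifies \<open>z'\<close> with a point of that ball.
\<close>
lemma saturation_nhd_boundary:
  assumes e: "e \<in> SQ" and g: "g \<in> SQ" and B: "open B"
    and p: "p \<in> B" "p \<in> bd e" and cov: "covers (fst e) {p} (fst g) {z}"
  shows "\<exists>d>0. \<forall>z'\<in>cran (fst g) \<union> bd g. dist z' z < d \<longrightarrow> (g, z') \<in> saturation e B"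
proof -
  have "open (snd e)"
    by (rule open_snd[OF e])
  then have "open (B \<inter> snd e)" "p \<in> B \<inter> snd e"
    using B p bd_eq[OF e] by auto
  then obtain \<epsilon> where \<epsilon>: "\<epsilon> > 0" "cball p \<epsilon> \<subseteq> B \<inter> snd e"
    using open_contains_cball by blast
  obtain d where d: "d > 0" "\<And>w. w \<in> cran (fst g) \<Longrightarrow> dist w z < d \<Longrightarrow>
      cinv (fst g) w \<in> cdom (fst e) \<and> cmap (fst e) (cinv (fst g) w) \<in> ball p \<epsilon>"
    using covers_point_nhd[OF cov \<epsilon>(1)] by blast
  have "(g, z') \<in> saturation e B" if z': "z' \<in> cran (fst g) \<union> bd g" "dist z' z < d" for z'
  proof -
    have "z' \<in> closure (cran (fst g))"
      using z'(1) bd_eq[OF g] closure_subset by blast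
    then obtain x where x: "\<And>i. x i \<in> cdom (fst g)" "(cmap (fst g) \<circ> x) \<longlonglongrightarrow> z'"
      using closure_cran_sequentially by blast
    have "eventually (\<lambda>j. (cmap (fst g) \<circ> x) j \<in> ball z d) sequentially"
      using topological_tendstoD[OF x(2) open_ball] z'(2) by (simp add: dist_commute)
    then obtain N where N: "\<forall>j\<ge>N. dist z (cmap (fst g) (x j)) < d"
      unfolding eventually_sequentially by auto
    define y where "y j = x (j + N)" for j
    have y: "y j \<in> cdom (fst e) \<and> y j \<in> cdom (fst g) \<and> cmap (fst e) (y j) \<in> ball p \<epsilon>" for j
    proof -
      have xj: "x (j + N) \<in> cdom (fst g)"
        by (rule x(1))
      have "dist (cmap (fst g) (x (j + N))) z < d"
        using N by (simp add: dist_commute)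
      then have "cinv (fst g) (cmap (fst g) (x (j + N))) \<in> cdom (fst e) \<and>
          cmap (fst e) (cinv (fst g) (cmap (fst g) (x (j + N)))) \<in> ball p \<epsilon>"
        by (rule d(2)[OF cmap_in_cran[OF xj]])
      then show ?thesis
        using xj by (simp add: y_def cinv_cmap[OF is_chart_fst[OF g] xj])
    qed
    then have "\<forall>j. (cmap (fst e) \<circ> y) j \<in> cball p \<epsilon>"
      by (simp add: less_imp_le)
    then obtain p' r where p': "p' \<in> cball p \<epsilon>" and r: "strict_mono r"
        "((cmap (fst e) \<circ> y) \<circ> r) \<longlonglongrightarrow> p'"
      using seq_compactE[OF compact_imp_seq_compact[OF compact_cball]] by blast
    have t: "(y \<circ> r) i \<in> cdom (fst e) \<and> (y \<circ> r) i \<in> cdom (fst g)" for i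
      using y by simp
    have lim_p: "(cmap (fst e) \<circ> (y \<circ> r)) \<longlonglongrightarrow> p'"
      using r(2) by (simp add: o_assoc)
    have lim_z: "(cmap (fst g) \<circ> (y \<circ> r)) \<longlonglongrightarrow> z'"
      using LIMSEQ_subseq_LIMSEQ[OF LIMSEQ_ignore_initial_segment[OF x(2), of N] r(1)]
      by (simp add: y_def o_def)
    have gz: "(g, z') \<in> topspace NQ"
      using g z'(1) by (simp add: topspace_NQ)
    show ?thesis
      using saturation_common_limit[OF e gz t lim_p _ lim_z] p' \<epsilon>(2) by blast
  qed
  then show ?thesis
    using d(1) by blast
qed

lemma openin_saturation:
  assumes e: "e \<in> SQ" and B: "open B"
  shows "openin NQ (saturation e B)"
  unfolding N_Q_def openin_sum_topology
proof (intro conjI ballI)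
  show "saturation e B \<subseteq> Sigma SQ (topspace \<circ> N_ext)"
    using topspace_sum_topology[of N_ext SQ] unfolding saturation_def N_Q_def by blast
  fix g assume g: "g \<in> SQ"
  show "openin (N_ext g) {z. (g, z) \<in> saturation e B}"
    unfolding N_ext_def openin_euclidean_subtopology_iff
  proof (intro conjI ballI)
    show "{z. (g, z) \<in> saturation e B} \<subseteq> cran (fst g) \<union> bd g"
      unfolding saturation_def topspace_NQ by blast
    fix z assume "z \<in> {z. (g, z) \<in> saturation e B}"
    then obtain p where p: "p \<in> B" "ident (e, p) (g, z)"
      unfolding saturation_def by blast
    then consider
        "p \<in> cran (fst e)" "cinv (fst e) p \<in> cdom (fst g)" "z = cmap (fst g) (cinv (fst e) p)"
      | "p \<in> bd e" "covers (fst e) {p} (fst g) {z}"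
      unfolding ident_iff bequiv_def by blast
    then show "\<exists>d>0. \<forall>z'\<in>cran (fst g) \<union> bd g. dist z' z < d \<longrightarrow>
        z' \<in> {z. (g, z) \<in> saturation e B}"
    proof cases
      case 1
      then show ?thesis
        using saturation_nhd_interior[OF e g B p(1) 1(1,2)] by auto
    next
      case 2
      then show ?thesis
        using saturation_nhd_boundary[OF e g B p(1) 2] by auto
    qed
  qed
qed

lemma saturation_meet_common_point:
  assumes e: "e \<in> SQ" and B: "open B" and C: "open C"
    and w: "w \<in> saturation e B" "w \<in> saturation f C"
  shows "\<exists>m. m \<in> cdom (fst e) \<and> m \<in> cdom (fst f) \<and> cmap (fst e) m \<in> B \<and> cmap (fst f) m \<in> C"
proof -
  obtain p q where p: "p \<in> B" "(e, p) \<in> topspace NQ" "ident (e, p) w" "w \<in> topspace NQ"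
    and q: "q \<in> C" "(f, q) \<in> topspace NQ" "ident (f, q) w"
    using w unfolding saturation_def by blast
  have "ident w (f, q)"
    using ident_sym[OF q(2) p(4) q(3)] .
  then have "ident (e, p) (f, q)"
    using ident_trans[OF p(2) p(4) q(2) p(3)] by blast
  then consider "p \<in> cran (fst e)" "cinv (fst e) p \<in> cdom (fst f)" "q = cmap (fst f) (cinv (fst e) p)"
    | "p \<in> bd e" "covers (fst f) {q} (fst e) {p}"
    unfolding ident_iff bequiv_def by blast
  then show ?thesis
  proof cases
    case 1
    then show ?thesis
      using p(1) q(1) cinv_in_cdom[OF 1(1)] cmap_cinv[OF 1(1)] by auto
  next
    case 2
    have "p \<in> closure (cran (fst e))"
      using 2(1) bd_eq[OF e] by blast
    then obtain x where x: "\<And>i. x i \<in> cdom (fst e)" "(cmap (fst e) \<circ> x) \<longlonglongrightarrow> p"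
      using closure_cran_sequentially by blast
    then have "(\<forall>i. x i \<in> cdom (fst e)) \<and> (\<exists>p'\<in>{p}. seq_acc euclidean (cmap (fst e) \<circ> x) p')"
      using seq_acc_LIMSEQ by blast
    then obtain r where r: "strict_mono r" "\<forall>i. x (r i) \<in> cdom (fst f)"
        "seq_acc euclidean (cmap (fst f) \<circ> (x \<circ> r)) q"
      using 2(2) unfolding covers_def by blast
    have "eventually (\<lambda>i. (cmap (fst e) \<circ> x \<circ> r) i \<in> B) sequentially"
      using topological_tendstoD[OF LIMSEQ_subseq_LIMSEQ[OF x(2) r(1)] B p(1)] .
    then obtain i where "(cmap (fst f) \<circ> (x \<circ> r)) i \<in> C" "(cmap (fst e) \<circ> x \<circ> r) i \<in> B"
      by (rule seq_acc_eventually_meets[OF r(3) C q(1)])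
    then show ?thesis
      using x(1) r(2) by auto
  qed
qed

lemma saturations_of_balls_disjoint:
  assumes u: "(e, x) \<in> topspace NQ" and v: "(f, y) \<in> topspace NQ"
    and not_ident: "\<not> ident (e, x) (f, y)"
  obtains k where
    "saturation e (ball x (1 / real (Suc k))) \<inter> saturation f (ball y (1 / real (Suc k))) = {}"
proof (rule ccontr)
  assume none: "\<not> thesis"
  note separated = that
  have e: "e \<in> SQ"
    using u unfolding topspace_NQ by blast
  have "\<exists>m. m \<in> cdom (fst e) \<and> m \<in> cdom (fst f) \<and>
      cmap (fst e) m \<in> ball x (1 / real (Suc k)) \<and> cmap (fst f) m \<in> ball y (1 / real (Suc k))" for k
  proof -
    obtain w where "w \<in> saturation e (ball x (1 / real (Suc k)))"
        "w \<in> saturation f (ball y (1 / real (Suc k)))"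
      using none separated by blast
    then show ?thesis
      using saturation_meet_common_point[OF e open_ball open_ball] by blast
  qed
  then obtain m where m: "\<forall>k. m k \<in> cdom (fst e) \<and> m k \<in> cdom (fst f) \<and>
      cmap (fst e) (m k) \<in> ball x (1 / real (Suc k)) \<and> cmap (fst f) (m k) \<in> ball y (1 / real (Suc k))"
    using choice[of "\<lambda>k m. m \<in> cdom (fst e) \<and> m \<in> cdom (fst f) \<and>
      cmap (fst e) m \<in> ball x (1 / real (Suc k)) \<and> cmap (fst f) m \<in> ball y (1 / real (Suc k))"]
    by blast
  have m_dom: "\<And>k. m k \<in> cdom (fst e) \<and> m k \<in> cdom (fst f)"
    using m by blast
  have "(cmap (fst e) \<circ> m) \<longlonglongrightarrow> x"
    by (rule LIMSEQ_dist_less_inverse_Suc) (use m in \<open>simp add: dist_commute\<close>)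
  moreover have "(cmap (fst f) \<circ> m) \<longlonglongrightarrow> y"
    by (rule LIMSEQ_dist_less_inverse_Suc) (use m in \<open>simp add: dist_commute\<close>)
  ultimately have "ident (e, x) (f, y)"
    by (rule ident_if_common_limit[OF u v m_dom])
  then show False
    using not_ident by blast
qed

theorem Hausdorff_completion: "Hausdorff_space (completion X A Q)"
  unfolding completion_def
proof (rule Hausdorff_quotient_topology)
  show "\<And>u. u \<in> topspace NQ \<Longrightarrow> ident u u"
    by (rule ident_refl)
  show "\<And>u v. u \<in> topspace NQ \<Longrightarrow> v \<in> topspace NQ \<Longrightarrow> ident u v \<Longrightarrow> ident v u"
    by (rule ident_sym)
  show "\<And>u v w. u \<in> topspace NQ \<Longrightarrow> v \<in> topspace NQ \<Longrightarrow> w \<in> topspace NQ \<Longrightarrow>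
      ident u v \<Longrightarrow> ident v w \<Longrightarrow> ident u w"
    by (rule ident_trans)
  fix u v assume u: "u \<in> topspace NQ" and v: "v \<in> topspace NQ" and not_ident: "\<not> ident u v"
  obtain e x f y where uv_eq: "u = (e, x)" "v = (f, y)" and e: "e \<in> SQ" and f: "f \<in> SQ"
    using u v unfolding topspace_NQ by blast
  obtain k where disjoint:
    "saturation e (ball x (1 / real (Suc k))) \<inter> saturation f (ball y (1 / real (Suc k))) = {}"
    using saturations_of_balls_disjoint u v not_ident unfolding uv_eq by blast
  define G where "G = saturation e (ball x (1 / real (Suc k)))"
  define H where "H = saturation f (ball y (1 / real (Suc k)))"
  have "openin NQ G" "openin NQ H"
    unfolding G_def H_def by (simp_all add: openin_saturation e f)
  moreover have "saturated_in NQ ident G" "saturated_in NQ ident H"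
    unfolding G_def H_def by (simp_all add: saturated_in_saturation)
  moreover have "u \<in> G" "v \<in> H"
    using u v unfolding G_def H_def uv_eq by (simp_all add: mem_saturation)
  moreover have "G \<inter> H = {}"
    using disjoint unfolding G_def H_def .
  ultimately show "\<exists>G H. openin NQ G \<and> openin NQ H \<and> saturated_in NQ ident G \<and>
      saturated_in NQ ident H \<and> u \<in> G \<and> v \<in> H \<and> G \<inter> H = {}"
    by blast
qed

end

theorem mainTheorem8:
  fixes X :: "'m topology" and A :: "('m, 'a::euclidean_space) chart set"
    and Q :: "(('m, 'a) chart \<times> 'a set) set"
  assumes "smooth_manifold X A"
    and "Q \<subseteq> extensions X A"
    and "pairwise (compatible_ext X) Q"
  shows "Hausdorff_space (completion X A Q)"
proof -
  interpret completion_setting X A Q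
    using assms by unfold_locales
  show ?thesis
    by (rule Hausdorff_completion)
qed

end
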